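(* Let $\mathcal T$ be a locally finite partial tessellation of ${\mathbb X}$. Every side of $\mathcal T$ is contained in exactly two tiles of $\mathcal T$, and it is equal to the intersection of these two tiles.
   Context: ${\mathbb X}$ is $\mathbb R^n$, the unit sphere $\mathbb S^n$, or hyperbolic $n$-space. A subspace is a complete totally geodesic submanifold; a hyperplane is a subspace of codimension 1; closed half-spaces are the closures of the two components of the complement of a hyperplane. A polyhedron is a nonempty intersection of a family of closed half-spaces whose boundary hyperplanes form a locally finite family; its codimension is the codimension of the smallest subspace containing it, and its relative interior $C^r$ is its interior in that subspace. It is thick if it has nonempty interior in ${\mathbb X}$. A partial tessellation is a set of thick polyhedra (tiles) with pairwise disjoint interiors; locally finite means every compact set meets only finitely many tiles. A cell of $\mathcal T$ is a nonempty intersection $C$ of tiles such that for every tile $T$ either $C\subseteq T$ or $C^r\cap T=\emptyset$; a side is a cell of codimension 1. *)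

theory Defs
  imports "HOL-Analysis.Analysis"
begin

text \<open>Euclidean: X = 'a itself (R^n, n = DIM('a)).
  Spherical: X = unit sphere in 'a (S^n, n = DIM('a) - 1); subspaces are the
    great spheres X \<inter> L, L a linear subspace.
  Hyperbolic: Beltrami--Klein (projective) model, X = open unit ball in 'a
    (H^n, n = DIM('a)); subspaces are the nonempty sets X \<inter> A, A affine.\<close>

datatype geom = Euclidean | Spherical | Hyperbolic

definition space :: "geom \<Rightarrow> 'a::euclidean_space set" where
  "space M = (case M of Euclidean \<Rightarrow> UNIV | Spherical \<Rightarrow> sphere 0 1 | Hyperbolic \<Rightarrow> ball 0 1)"

definition hyperplane_ok :: "geom \<Rightarrow> 'a::euclidean_space \<Rightarrow> real \<Rightarrow> bool" where
  "hyperplane_ok M a b \<longleftrightarrow> a \<noteq> 0 \<and> (M = Spherical \<longrightarrow> b = 0)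
     \<and> space M \<inter> {x. a \<bullet> x = b} \<noteq> {}"

definition hyperplane :: "geom \<Rightarrow> 'a::euclidean_space set \<Rightarrow> bool" where
  "hyperplane M H \<longleftrightarrow> (\<exists>a b. hyperplane_ok M a b \<and> H = space M \<inter> {x. a \<bullet> x = b})"

definition closed_halfspace :: "geom \<Rightarrow> 'a::euclidean_space set \<Rightarrow> bool" where
  "closed_halfspace M S \<longleftrightarrow> (\<exists>a b. hyperplane_ok M a b \<and> S = space M \<inter> {x. a \<bullet> x \<le> b})"

definition locally_finite_fam :: "geom \<Rightarrow> 'a::euclidean_space set set \<Rightarrow> bool" where
  "locally_finite_fam M \<A> \<longleftrightarrow>
     (\<forall>K. compact K \<and> K \<subseteq> space M \<longrightarrow> finite {A \<in> \<A>. A \<inter> K \<noteq> {}})"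

definition polyhedron :: "geom \<Rightarrow> 'a::euclidean_space set \<Rightarrow> bool" where
  "polyhedron M P \<longleftrightarrow> P \<noteq> {} \<and>
     (\<exists>F. (\<forall>S\<in>F. closed_halfspace M S)
        \<and> locally_finite_fam M ((\<lambda>S. top_of_set (space M) frontier_of S) ` F)
        \<and> P = space M \<inter> \<Inter>F)"

definition geodesic_hull :: "geom \<Rightarrow> 'a::euclidean_space set \<Rightarrow> 'a set" where
  "geodesic_hull M C = (case M of
      Euclidean \<Rightarrow> affine hull C
    | Spherical \<Rightarrow> space M \<inter> span C
    | Hyperbolic \<Rightarrow> space M \<inter> affine hull C)"

definition codim :: "geom \<Rightarrow> 'a::euclidean_space set \<Rightarrow> int" where
  "codim M C = (case M of
      Spherical \<Rightarrow> int DIM('a) - int (dim (span C))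
    | _ \<Rightarrow> int DIM('a) - aff_dim C)"

definition relint :: "geom \<Rightarrow> 'a::euclidean_space set \<Rightarrow> 'a set" where
  "relint M C = top_of_set (geodesic_hull M C) interior_of C"

definition thick :: "geom \<Rightarrow> 'a::euclidean_space set \<Rightarrow> bool" where
  "thick M P \<longleftrightarrow> top_of_set (space M) interior_of P \<noteq> {}"

definition partial_tessellation :: "geom \<Rightarrow> 'a::euclidean_space set set \<Rightarrow> bool" where
  "partial_tessellation M \<T> \<longleftrightarrow>
     (\<forall>T\<in>\<T>. polyhedron M T \<and> thick M T) \<and>
     (\<forall>T1\<in>\<T>. \<forall>T2\<in>\<T>. T1 \<noteq> T2 \<longrightarrow>
        top_of_set (space M) interior_of T1 \<inter> top_of_set (space M) interior_of T2 = {})"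

definition cell :: "geom \<Rightarrow> 'a::euclidean_space set set \<Rightarrow> 'a set \<Rightarrow> bool" where
  "cell M \<T> C \<longleftrightarrow> C \<noteq> {} \<and> (\<exists>\<S>. \<S> \<subseteq> \<T> \<and> \<S> \<noteq> {} \<and> C = \<Inter>\<S>) \<and>
     (\<forall>T\<in>\<T>. C \<subseteq> T \<or> relint M C \<inter> T = {})"

definition side :: "geom \<Rightarrow> 'a::euclidean_space set set \<Rightarrow> 'a set \<Rightarrow> bool" where
  "side M \<T> C \<longleftrightarrow> cell M \<T> C \<and> codim M C = 1"

end

theory Submission
  imports Defs
begin

text \<open>In the Euclidean and the hyperbolic (projective) model a tile is a convex body and a side
  \<open>C\<close> is a convex set spanning an affine hyperplane \<open>H\<close>. Around a relative interior point \<open>p\<close> of \<open>C\<close>,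
  every tile containing \<open>C\<close> contains a disk of \<open>H\<close>; being convex with nonempty interior, it
  then contains in its interior one of the two open half-balls at \<open>p\<close> bounded by \<open>H\<close>. Since
  interiors of distinct tiles are disjoint, each half-ball is claimed by at most one tile, so at
  most two tiles contain \<open>C\<close>. As \<open>C\<close> is an intersection of tiles and, having codimension 1, is not
  itself a tile, exactly two tiles contain it and \<open>C\<close> is their intersection. On the sphere the
  same argument is applied to the convex cones spanned by the tiles.\<close>

lemma convex_interior_halfball:
  fixes K :: "'a::euclidean_space set"
  assumes "convex K" and p: "a \<bullet> p = b" and "r > 0"
    and disk: "ball p r \<inter> {y. a \<bullet> y = b} \<subseteq> K"
    and x: "x \<in> interior K" "a \<bullet> x > b"
  obtains \<delta> where "\<delta> > 0" "\<And>y. y \<in> ball p \<delta> \<Longrightarrow> a \<bullet> y > b \<Longrightarrow> y \<in> interior K"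
proof -
  define t where "t y = (a \<bullet> y - b) / (a \<bullet> x - b)" for y
  \<comment> \<open>\<open>d y\<close> is where the line through \<open>x\<close> and \<open>y\<close> meets the hyperplane\<close>
  define d where "d y = (y - t y *\<^sub>R x) /\<^sub>R (1 - t y)" for y
  have tp: "t p = 0" and dp: "d p = p"
    using p by (simp_all add: t_def d_def)
  have "continuous (at p) t"
    unfolding t_def using x(2) by (intro continuous_intros) auto
  then obtain \<delta>1 where "\<delta>1 > 0" and \<delta>1: "t ` ball p \<delta>1 \<subseteq> ball 0 1"
    using tp continuous_at_ball[of p t] by (metis zero_less_one)
  have "continuous (at p) d"
    unfolding d_def using tp \<open>continuous (at p) t\<close> by (intro continuous_intros) auto
  then obtain \<delta>2 where "\<delta>2 > 0" and \<delta>2: "d ` ball p \<delta>2 \<subseteq> ball p r"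
    using dp \<open>r > 0\<close> continuous_at_ball[of p d] by metis
  show thesis
  proof
    show "min \<delta>1 \<delta>2 > 0" using \<open>\<delta>1 > 0\<close> \<open>\<delta>2 > 0\<close> by simp
    fix y assume y: "y \<in> ball p (min \<delta>1 \<delta>2)" "a \<bullet> y > b"
    have "y \<in> ball p \<delta>1" using y by simp
    then have "t y \<in> ball 0 1" using \<delta>1 by blast
    then have "t y > 0" "t y < 1"
      using y x(2) by (auto simp: t_def)
    have "a \<bullet> y - b = t y * (a \<bullet> x - b)"
      using x(2) by (simp add: t_def)
    then have "a \<bullet> (y - t y *\<^sub>R x) = (1 - t y) * b"
      by (simp add: inner_diff_right algebra_simps)
    then have "a \<bullet> d y = b"
      using \<open>t y < 1\<close> by (simp add: d_def)
    moreover have "y \<in> ball p \<delta>2" using y by simp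
    then have "d y \<in> ball p r" using \<delta>2 by blast
    ultimately have "d y \<in> closure K" using disk closure_subset by blast
    moreover have "(1 - t y) *\<^sub>R d y = y - t y *\<^sub>R x"
      using \<open>t y < 1\<close> by (simp add: d_def)
    then have "y = d y - t y *\<^sub>R (d y - x)"
      by (simp add: algebra_simps)
    ultimately show "y \<in> interior K"
      using mem_interior_closure_convex_shrink[OF \<open>convex K\<close> x(1)] \<open>t y > 0\<close> \<open>t y < 1\<close>
      by (metis less_imp_le)
  qed
qed

lemma convex_interiors_meet_on_same_side:
  fixes K1 K2 :: "'a::euclidean_space set"
  assumes K1: "convex K1" "ball p r \<inter> {y. a \<bullet> y = b} \<subseteq> K1"
    and K2: "convex K2" "ball p r \<inter> {y. a \<bullet> y = b} \<subseteq> K2"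
    and "a \<noteq> 0" "a \<bullet> p = b" "r > 0"
    and x: "x1 \<in> interior K1" "x2 \<in> interior K2" "(a \<bullet> x1 - b) * (a \<bullet> x2 - b) > 0"
  shows "interior K1 \<inter> interior K2 \<noteq> {}"
proof -
  have meet: "interior K1 \<inter> interior K2 \<noteq> {}"
    if c: "c \<noteq> 0" "c \<bullet> p = e" "{y. c \<bullet> y = e} = {y. a \<bullet> y = b}" "c \<bullet> x1 > e" "c \<bullet> x2 > e"
    for c e
  proof -
    obtain \<delta>1 where "\<delta>1 > 0" and \<delta>1: "\<And>y. y \<in> ball p \<delta>1 \<Longrightarrow> c \<bullet> y > e \<Longrightarrow> y \<in> interior K1"
      using convex_interior_halfball[of K1 c p e r x1] K1 c x \<open>r > 0\<close> by metis
    obtain \<delta>2 where "\<delta>2 > 0" and \<delta>2: "\<And>y. y \<in> ball p \<delta>2 \<Longrightarrow> c \<bullet> y > e \<Longrightarrow> y \<in> interior K2"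
      using convex_interior_halfball[of K2 c p e r x2] K2 c x \<open>r > 0\<close> by metis
    have "p \<in> closure {y. c \<bullet> y > e}"
      using c by simp
    then obtain y where "c \<bullet> y > e" "y \<in> ball p (min \<delta>1 \<delta>2)"
      using \<open>\<delta>1 > 0\<close> \<open>\<delta>2 > 0\<close> unfolding closure_approachable
      by (metis min_less_iff_conj mem_Collect_eq mem_ball dist_commute)
    then show ?thesis
      using \<delta>1 \<delta>2 by auto
  qed
  from x(3) consider "a \<bullet> x1 > b" "a \<bullet> x2 > b" | "(- a) \<bullet> x1 > - b" "(- a) \<bullet> x2 > - b"
    by (auto simp: zero_less_mult_iff)
  then show ?thesis
    using meet[of a b] meet[of "- a" "- b"] \<open>a \<noteq> 0\<close> \<open>a \<bullet> p = b\<close> by cases auto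
qed

lemma interior_point_off_hyperplane:
  fixes K :: "'a::euclidean_space set"
  assumes "interior K \<noteq> {}" "a \<noteq> 0"
  obtains x where "x \<in> interior K" "a \<bullet> x \<noteq> b"
proof -
  have "\<not> interior K \<subseteq> {x. a \<bullet> x = b}"
    using interior_mono[of "interior K" "{x. a \<bullet> x = b}"] assms by auto
  then show thesis
    using that by blast
qed

lemma convex_through_hyperplane_disk_at_most_two:
  fixes K :: "'i \<Rightarrow> 'a::euclidean_space set"
  assumes K: "\<And>i. i \<in> I \<Longrightarrow> convex (K i)" "\<And>i. i \<in> I \<Longrightarrow> interior (K i) \<noteq> {}"
      "\<And>i. i \<in> I \<Longrightarrow> ball p r \<inter> {y. a \<bullet> y = b} \<subseteq> K i"
    and "a \<noteq> 0" "a \<bullet> p = b" "r > 0"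
    and disj: "disjoint_family_on (\<lambda>i. interior (K i)) I"
    and ijk: "i \<in> I" "j \<in> I" "k \<in> I"
  shows "i = j \<or> i = k \<or> j = k"
proof -
  have meet: "interior (K u) \<inter> interior (K v) \<noteq> {}"
    if "u \<in> I" "v \<in> I" "xu \<in> interior (K u)" "xv \<in> interior (K v)"
      "(a \<bullet> xu - b) * (a \<bullet> xv - b) > 0" for u v xu xv
    using convex_interiors_meet_on_same_side[of "K u" p r a b "K v" xu xv] K that assms(4-6) by blast
  obtain xi where xi: "xi \<in> interior (K i)" "a \<bullet> xi \<noteq> b"
    using interior_point_off_hyperplane K(2) ijk \<open>a \<noteq> 0\<close> by metis
  obtain xj where xj: "xj \<in> interior (K j)" "a \<bullet> xj \<noteq> b"
    using interior_point_off_hyperplane K(2) ijk \<open>a \<noteq> 0\<close> by metis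
  obtain xk where xk: "xk \<in> interior (K k)" "a \<bullet> xk \<noteq> b"
    using interior_point_off_hyperplane K(2) ijk \<open>a \<noteq> 0\<close> by metis
  have "(a \<bullet> xi - b) * (a \<bullet> xj - b) > 0 \<or> (a \<bullet> xi - b) * (a \<bullet> xk - b) > 0
      \<or> (a \<bullet> xj - b) * (a \<bullet> xk - b) > 0"
    using xi(2) xj(2) xk(2) by (auto simp: zero_less_mult_iff)
  then show ?thesis
    using meet[OF ijk(1,2) xi(1) xj(1)] meet[OF ijk(1,3) xi(1) xk(1)] meet[OF ijk(2,3) xj(1) xk(1)]
      disj ijk unfolding disjoint_family_on_def by blast
qed

lemma exactly_two_tiles_contain_intersection:
  fixes K :: "'b set \<Rightarrow> 'a::euclidean_space set"
  assumes C: "C = \<Inter>\<S>" "\<S> \<subseteq> \<T>" "\<S> \<noteq> {}" "C \<notin> \<T>"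
    and K: "\<And>T. T \<in> \<T> \<Longrightarrow> C \<subseteq> T \<Longrightarrow>
      convex (K T) \<and> interior (K T) \<noteq> {} \<and> ball p r \<inter> {y. a \<bullet> y = b} \<subseteq> K T"
    and "a \<noteq> 0" "a \<bullet> p = b" "r > 0"
    and disj: "disjoint_family_on (\<lambda>T. interior (K T)) \<T>"
  shows "\<exists>T1 T2. T1 \<in> \<T> \<and> T2 \<in> \<T> \<and> T1 \<noteq> T2 \<and> {T \<in> \<T>. C \<subseteq> T} = {T1, T2} \<and> C = T1 \<inter> T2"
proof -
  obtain T1 where T1: "T1 \<in> \<S>"
    using C by blast
  have "\<S> \<noteq> {T1}"
    using C T1 by auto
  then obtain T2 where T2: "T2 \<in> \<S>" "T2 \<noteq> T1"
    using T1 by blast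
  define \<P> where "\<P> = {T \<in> \<T>. C \<subseteq> T}"
  have "\<S> \<subseteq> \<P>"
    using C by (auto simp: \<P>_def)
  have "T \<in> {T1, T2}" if "T \<in> \<P>" for T
    using convex_through_hyperplane_disk_at_most_two[of \<P> K p r a b T1 T2 T] that T1 T2 \<open>\<S> \<subseteq> \<P>\<close>
      K assms(6-8) disjoint_family_on_mono[OF _ disj]
    by (auto simp: \<P>_def)
  then have "\<P> = {T1, T2}" and "\<S> = {T1, T2}"
    using T1 T2 \<open>\<S> \<subseteq> \<P>\<close> by auto
  then show ?thesis
    using C T2 \<P>_def by auto
qed

lemma convex_hyperplane_disk:
  fixes C :: "'a::euclidean_space set"
  assumes "convex C" "C \<noteq> {}" "affine hull C = {x. a \<bullet> x = b}"
  obtains p r where "a \<bullet> p = b" "r > 0" "ball p r \<inter> {y. a \<bullet> y = b} \<subseteq> C"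
proof -
  obtain p where "p \<in> rel_interior C"
    using rel_interior_eq_empty assms(1,2) by blast
  then obtain r where "p \<in> C" "r > 0" "ball p r \<inter> affine hull C \<subseteq> C"
    using mem_rel_interior_ball by blast
  moreover have "a \<bullet> p = b"
    using \<open>p \<in> C\<close> hull_subset[of C affine] assms(3) by auto
  ultimately show thesis
    using that assms(3) by blast
qed

lemma space_nonspherical:
  assumes "M \<noteq> Spherical"
  shows "open (space M)" "convex (space M)"
  using assms by (cases M; simp add: space_def)+

lemma interior_of_space_nonspherical:
  assumes "M \<noteq> Spherical" "T \<subseteq> space M"
  shows "top_of_set (space M) interior_of T = interior T"
  using assms interior_of_subtopology_open[of euclidean "space M" T] space_nonspherical
    interior_subset[of T]
  by auto

lemma polyhedron_nonspherical_convex: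
  assumes "M \<noteq> Spherical" "polyhedron M P"
  shows "convex P" "P \<subseteq> space M"
proof -
  obtain F where F: "\<forall>S\<in>F. closed_halfspace M S" "P = space M \<inter> \<Inter>F"
    using assms(2) unfolding polyhedron_def by blast
  have "convex S" if "S \<in> F" for S
    using F that space_nonspherical[OF assms(1)]
    by (auto simp: closed_halfspace_def intro!: convex_Int convex_halfspace_le)
  then show "convex P" "P \<subseteq> space M"
    using F space_nonspherical[OF assms(1)] by (auto intro!: convex_Int convex_Inter)
qed

lemma side_nonspherical_two_tiles:
  assumes nonsph: "M \<noteq> Spherical" and tess: "partial_tessellation M \<T>" and "side M \<T> C"
  shows "\<exists>T1 T2. T1 \<in> \<T> \<and> T2 \<in> \<T> \<and> T1 \<noteq> T2 \<and> {T \<in> \<T>. C \<subseteq> T} = {T1, T2} \<and> C = T1 \<inter> T2"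
proof -
  have codim: "codim M X = int DIM('a) - aff_dim X" for X :: "'a set"
    using nonsph by (cases M) (auto simp: codim_def)
  have tile: "convex T \<and> interior T \<noteq> {} \<and> T \<subseteq> space M" if "T \<in> \<T>" for T
    using tess that polyhedron_nonspherical_convex[OF nonsph]
      interior_of_space_nonspherical[OF nonsph]
    unfolding partial_tessellation_def thick_def by metis
  have disj: "disjoint_family_on interior \<T>"
    using tess tile interior_of_space_nonspherical[OF nonsph]
    unfolding partial_tessellation_def disjoint_family_on_def by metis
  obtain \<S> where C: "C \<noteq> {}" "C = \<Inter>\<S>" "\<S> \<subseteq> \<T>" "\<S> \<noteq> {}" and "codim M C = 1"
    using \<open>side M \<T> C\<close> unfolding side_def cell_def by blast
  then have "C \<notin> \<T>"
    using tile aff_dim_nonempty_interior codim by fastforce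
  have "convex C"
    using C tile by (auto intro!: convex_Inter)
  have "aff_dim C = int DIM('a) - 1"
    using \<open>codim M C = 1\<close> codim by simp
  then obtain a b where "a \<noteq> 0" and hull: "affine hull C = {x. a \<bullet> x = b}"
    using aff_dim_eq_hyperplane[of C] by (auto simp: of_nat_diff)
  obtain p r where "a \<bullet> p = b" "r > 0" and disk: "ball p r \<inter> {y. a \<bullet> y = b} \<subseteq> C"
    using convex_hyperplane_disk \<open>convex C\<close> C(1) hull by metis
  show ?thesis
    by (rule exactly_two_tiles_contain_intersection[where K=id, OF C(2,3,4) \<open>C \<notin> \<T>\<close> _
          \<open>a \<noteq> 0\<close> \<open>a \<bullet> p = b\<close> \<open>r > 0\<close>])
      (use tile disk disj in auto)
qed

lemma polyhedron_spherical_convex_cone: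
  assumes "polyhedron Spherical P"
  obtains K :: "'a::euclidean_space set" where "convex_cone K" "P = sphere 0 1 \<inter> K"
proof -
  obtain F where F: "\<forall>S\<in>F. closed_halfspace Spherical S" "P = sphere 0 1 \<inter> \<Inter>F"
    using assms unfolding polyhedron_def by (auto simp: space_def)
  have "\<forall>S\<in>F. \<exists>a. S = sphere 0 1 \<inter> {x. a \<bullet> x \<le> 0}"
    using F(1) by (auto simp: closed_halfspace_def hyperplane_ok_def space_def)
  then obtain n where n: "\<And>S. S \<in> F \<Longrightarrow> S = sphere 0 1 \<inter> {x. n S \<bullet> x \<le> 0}"
    by metis
  define K where "K = (\<Inter>S\<in>F. {x. n S \<bullet> x \<le> (0::real)})"
  have "convex_cone K"
    unfolding K_def by (auto intro!: convex_cone_Inter convex_cone_halfspace_le)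
  moreover have "P = sphere 0 1 \<inter> K"
    using F(2) n unfolding K_def by blast
  ultimately show thesis
    using that by blast
qed

lemma conic_subset_span_sphere:
  fixes K :: "'a::euclidean_space set"
  assumes "conic K"
  shows "K \<subseteq> span (sphere 0 1 \<inter> K)"
proof
  fix x assume "x \<in> K"
  show "x \<in> span (sphere 0 1 \<inter> K)"
  proof (cases "x = 0")
    case False
    then have "x /\<^sub>R norm x \<in> sphere 0 1 \<inter> K"
      using \<open>x \<in> K\<close> conicD[OF assms] by (simp add: norm_divide)
    then have "norm x *\<^sub>R (x /\<^sub>R norm x) \<in> span (sphere 0 1 \<inter> K)"
      by (intro span_mul span_base)
    then show ?thesis
      using False by simp
  qed (simp add: span_zero)
qed

lemma conic_subset_of_sphere_subset:
  fixes K L :: "'a::euclidean_space set"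
  assumes "conic K" "conic L" "0 \<in> L" "sphere 0 1 \<inter> K \<subseteq> L"
  shows "K \<subseteq> L"
proof
  fix x assume "x \<in> K"
  show "x \<in> L"
  proof (cases "x = 0")
    case False
    have "x /\<^sub>R norm x \<in> K"
      using conicD[OF assms(1) \<open>x \<in> K\<close>] by simp
    then have "x /\<^sub>R norm x \<in> sphere 0 1 \<inter> K"
      using False by simp
    then have "x /\<^sub>R norm x \<in> L"
      using assms(4) by blast
    then have "norm x *\<^sub>R (x /\<^sub>R norm x) \<in> L"
      using conicD[OF assms(2) _ norm_ge_zero] by blast
    then show ?thesis
      using False by simp
  qed (use assms(3) in simp)
qed

lemma interior_conic_scaleR:
  fixes K :: "'a::euclidean_space set"
  assumes "conic K" "c > 0" "x \<in> interior K"
  shows "c *\<^sub>R x \<in> interior K"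
proof -
  have "open ((*\<^sub>R) c ` interior K)"
    using assms(2) by (intro open_scaling) auto
  moreover have "(*\<^sub>R) c ` interior K \<subseteq> K"
    using assms(1,2) interior_subset[of K] conicD by fastforce
  ultimately have "(*\<^sub>R) c ` interior K \<subseteq> interior K"
    by (simp add: interior_maximal)
  then show ?thesis
    using assms(3) by auto
qed

lemma sphere_interior_of_conic:
  fixes K :: "'a::euclidean_space set"
  assumes "conic K"
  shows "top_of_set (sphere 0 1) interior_of (sphere 0 1 \<inter> K) = sphere 0 1 \<inter> interior K"
proof
  have "sphere 0 1 \<inter> interior K \<subseteq> sphere 0 1 \<inter> K"
    using interior_subset by blast
  moreover have "openin (top_of_set (sphere 0 1)) (sphere 0 1 \<inter> interior K)"
    by (simp add: openin_open_Int)
  ultimately show "sphere 0 1 \<inter> interior K \<subseteq> top_of_set (sphere 0 1) interior_of (sphere 0 1 \<inter> K)"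
    by (rule interior_of_maximal)
next
  show "top_of_set (sphere 0 1) interior_of (sphere 0 1 \<inter> K) \<subseteq> sphere 0 1 \<inter> interior K"
  proof
    fix x assume "x \<in> top_of_set (sphere 0 1) interior_of (sphere 0 1 \<inter> K)"
    then obtain U where U: "openin (top_of_set (sphere 0 1)) U" "x \<in> U" "U \<subseteq> sphere 0 1 \<inter> K"
      by (auto simp: interior_of_def)
    then obtain V where "open V" and UV: "U = sphere 0 1 \<inter> V"
      using openin_open by metis
    define W where "W = - {0} \<inter> (\<lambda>y. y /\<^sub>R norm y) -` V"
    \<comment> \<open>the open cone over \<open>U\<close>\<close>
    have "continuous_on (- {0}) (\<lambda>y::'a. y /\<^sub>R norm y)"
      by (intro continuous_intros) auto
    then have "open W"
      unfolding W_def using \<open>open V\<close> by (intro continuous_open_preimage) auto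
    have "W \<subseteq> K"
    proof
      fix y assume "y \<in> W"
      then have "y \<noteq> 0" "y /\<^sub>R norm y \<in> U"
        by (auto simp: W_def UV norm_divide)
      then have "norm y *\<^sub>R (y /\<^sub>R norm y) \<in> K"
        using U(3) conicD[OF assms _ norm_ge_zero] by blast
      then show "y \<in> K"
        using \<open>y \<noteq> 0\<close> by simp
    qed
    then have "W \<subseteq> interior K"
      using \<open>open W\<close> by (rule interior_maximal)
    moreover have "x \<in> W" "x \<in> sphere 0 1"
      using U(2) by (auto simp: W_def UV)
    ultimately show "x \<in> sphere 0 1 \<inter> interior K"
      by blast
  qed
qed

lemma interior_conic_disjoint:
  fixes K L :: "'a::euclidean_space set"
  assumes "conic K" "conic L" and disj: "sphere 0 1 \<inter> interior K \<inter> interior L = {}"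
  shows "interior K \<inter> interior L = {}"
proof (rule ccontr)
  assume "interior K \<inter> interior L \<noteq> {}"
  moreover have "\<not> interior K \<inter> interior L \<subseteq> {0}"
    using interior_mono[of "interior K \<inter> interior L" "{0}"] calculation by auto
  then obtain z where "z \<in> interior K" "z \<in> interior L" "z \<noteq> 0"
    by blast
  then have "inverse (norm z) *\<^sub>R z \<in> sphere 0 1 \<inter> interior K \<inter> interior L"
    using interior_conic_scaleR[OF assms(1)] interior_conic_scaleR[OF assms(2)]
    by (simp add: norm_divide)
  then show False
    using disj by blast
qed

lemma dim_span_sphere_conic:
  fixes K :: "'a::euclidean_space set"
  assumes "conic K" "interior K \<noteq> {}"
  shows "dim (span (sphere 0 1 \<inter> K)) = DIM('a)"
proof -
  have "dim (interior K) \<le> dim (span (sphere 0 1 \<inter> K))"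
    using conic_subset_span_sphere[OF assms(1)] interior_subset by (blast intro: dim_subset)
  moreover have "dim (interior K) = DIM('a)"
    using dim_openin[of UNIV "interior K"] assms(2) by simp
  ultimately show ?thesis
    using dim_subset_UNIV[of "span (sphere 0 1 \<inter> K)"] by simp
qed

lemma spherical_tessellation_cones:
  fixes \<T> :: "'a::euclidean_space set set"
  assumes tess: "partial_tessellation Spherical \<T>"
  obtains cone where
    "\<And>T. T \<in> \<T> \<Longrightarrow> convex_cone (cone T) \<and> interior (cone T) \<noteq> {} \<and> T = sphere 0 1 \<inter> cone T"
    "disjoint_family_on (\<lambda>T. interior (cone T)) \<T>"
proof -
  have "\<forall>T\<in>\<T>. \<exists>K. convex_cone K \<and> T = sphere 0 1 \<inter> K"
    using tess polyhedron_spherical_convex_cone unfolding partial_tessellation_def by metis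
  then obtain cone where cone: "\<And>T. T \<in> \<T> \<Longrightarrow> convex_cone (cone T) \<and> T = sphere 0 1 \<inter> cone T"
    by metis
  then have conic: "\<And>T. T \<in> \<T> \<Longrightarrow> conic (cone T)"
    by (simp add: convex_cone_def)
  have interior: "top_of_set (space Spherical) interior_of T = sphere 0 1 \<inter> interior (cone T)"
    if "T \<in> \<T>" for T
    using sphere_interior_of_conic[OF conic[OF that]] cone[OF that] by (simp add: space_def)
  have "interior (cone T) \<noteq> {}" if "T \<in> \<T>" for T
  proof -
    have "thick Spherical T"
      using tess that unfolding partial_tessellation_def by blast
    then show ?thesis
      using interior[OF that] unfolding thick_def by auto
  qed
  moreover have "interior (cone T1) \<inter> interior (cone T2) = {}"
    if "T1 \<in> \<T>" "T2 \<in> \<T>" "T1 \<noteq> T2" for T1 T2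
  proof -
    have "top_of_set (space Spherical) interior_of T1 \<inter> top_of_set (space Spherical) interior_of T2 = {}"
      using tess that unfolding partial_tessellation_def by blast
    then have "sphere 0 1 \<inter> interior (cone T1) \<inter> interior (cone T2) = {}"
      using interior that by auto
    then show ?thesis
      using interior_conic_disjoint conic that by blast
  qed
  ultimately show thesis
    using that[of cone] cone unfolding disjoint_family_on_def by blast
qed

lemma side_spherical_two_tiles:
  assumes tess: "partial_tessellation Spherical \<T>" and "side Spherical \<T> C"
  shows "\<exists>T1 T2. T1 \<in> \<T> \<and> T2 \<in> \<T> \<and> T1 \<noteq> T2 \<and> {T \<in> \<T>. C \<subseteq> T} = {T1, T2} \<and> C = T1 \<inter> T2"
proof -
  obtain cone where cone: "\<And>T. T \<in> \<T> \<Longrightarrow>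
      convex_cone (cone T) \<and> interior (cone T) \<noteq> {} \<and> T = sphere 0 1 \<inter> cone T"
    and disj: "disjoint_family_on (\<lambda>T. interior (cone T)) \<T>"
    using spherical_tessellation_cones[OF tess] by blast
  then have conic: "\<And>T. T \<in> \<T> \<Longrightarrow> conic (cone T)"
    by (simp add: convex_cone_def)
  obtain \<S> where C: "C \<noteq> {}" "C = \<Inter>\<S>" "\<S> \<subseteq> \<T>" "\<S> \<noteq> {}" and "codim Spherical C = 1"
    using \<open>side Spherical \<T> C\<close> unfolding side_def cell_def by blast
  have "codim Spherical T = 0" if "T \<in> \<T>" for T
    using dim_span_sphere_conic[OF conic[OF that]] cone[OF that] by (simp add: codim_def)
  then have "C \<notin> \<T>"
    using \<open>codim Spherical C = 1\<close> by auto
  define K where "K = \<Inter>(cone ` \<S>)"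
  have "convex_cone K"
    unfolding K_def using C cone by (auto intro!: convex_cone_Inter)
  then have "conic K" "convex K" "0 \<in> K"
    by (auto simp: convex_cone_def convex_cone_contains_0)
  have CK: "C = sphere 0 1 \<inter> K"
    using C cone unfolding K_def by blast
  have "span K = span C"
    using conic_subset_span_sphere[OF \<open>conic K\<close>] CK span_mono[of C K] span_minimal[of K "span C"]
    by auto
  have "dim C = DIM('a) - 1"
    using \<open>codim Spherical C = 1\<close> by (simp add: codim_def dim_span)
  then obtain a where "a \<noteq> 0" and "span C = {x. a \<bullet> x = 0}"
    using dim_eq_hyperplane[of C] by blast
  then have "affine hull K = {x. a \<bullet> x = 0}"
    using affine_hull_span_0[of K] \<open>0 \<in> K\<close> hull_subset[of K affine] \<open>span K = span C\<close> by blast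
  then obtain p r where "a \<bullet> p = 0" "r > 0" and disk: "ball p r \<inter> {y. a \<bullet> y = 0} \<subseteq> K"
    using convex_hyperplane_disk \<open>convex K\<close> \<open>0 \<in> K\<close> by blast
  have "convex (cone T) \<and> interior (cone T) \<noteq> {} \<and> ball p r \<inter> {y. a \<bullet> y = 0} \<subseteq> cone T"
    if "T \<in> \<T>" "C \<subseteq> T" for T
  proof -
    have "convex_cone (cone T)" "sphere 0 1 \<inter> K \<subseteq> cone T"
      using cone[OF that(1)] CK that(2) by auto
    then have "K \<subseteq> cone T"
      using conic_subset_of_sphere_subset[OF \<open>conic K\<close> conic[OF that(1)]]
      by (simp add: convex_cone_contains_0)
    then show ?thesis
      using \<open>convex_cone (cone T)\<close> cone[OF that(1)] disk by (simp add: convex_cone_def)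
  qed
  then show ?thesis
    by (rule exactly_two_tiles_contain_intersection[where K=cone, OF C(2,3,4) \<open>C \<notin> \<T>\<close> _
          \<open>a \<noteq> 0\<close> \<open>a \<bullet> p = 0\<close> \<open>r > 0\<close> disj])
qed

theorem proposition4p4:
  fixes M :: geom and \<T> :: "'a::euclidean_space set set" and C :: "'a set"
  assumes "partial_tessellation M \<T>"
    and "locally_finite_fam M \<T>"
    and "side M \<T> C"
  shows "\<exists>T1 T2. T1 \<in> \<T> \<and> T2 \<in> \<T> \<and> T1 \<noteq> T2 \<and> {T \<in> \<T>. C \<subseteq> T} = {T1, T2} \<and> C = T1 \<inter> T2"
proof (cases "M = Spherical")
  case True
  then show ?thesis
    using side_spherical_two_tiles assms(1,3) by simp
next
  case False
  then show ?thesis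
    using side_nonspherical_two_tiles assms(1,3) by simp
qed

end
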